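(* For any two vertex-disjoint graphs $G$ and $H$, $f^-(G+H)=f^-(G)+f^-(H)$ and $f^+(G+H)=f^+(G)+f^+(H)$.
   Context: All graphs are finite, simple, undirected and connected. $N[v]=N(v)\cup\{v\}$ is the closed neighbourhood. A chromatic colouring of $G$ is a proper vertex colouring $c:V(G)\to\{c_1,\dots,c_{\chi(G)}\}$. With respect to $c$, a vertex $v$ yields a rainbow neighbourhood if $N[v]$ contains a vertex of each colour $c_1,\dots,c_{\chi(G)}$; $r_\chi(G)$ is the number of such vertices, and $r^-_\chi(G)$, $r^+_\chi(G)$ are its minimum and maximum over all chromatic colourings of $G$. Fading: for a set $F\subseteq V(G)$ (a fade set), the vertices of $F$ receive a transparent colour $c^\circ$ not among $c_1,\dots,c_{\chi(G)}$; after fading, $v$ yields a rainbow neighbourhood iff for every $i$ some vertex of $N[v]\setminus F$ has colour $c_i$. The fading number $f^-(G)$ is the maximum $|F|$ over chromatic colourings $c$ attaining $r_\chi=r^-_\chi(G)$ and fade sets $F$ such that, after fading $F$, the number of vertices yielding rainbow neighbourhoods is still $r^-_\chi(G)$; $f^+(G)$ is defined analogously with $r^+_\chi(G)$. The join $G_1+G_2$ of vertex-disjoint graphs is $G_1\cup G_2$ together with all edges joining a vertex of $G_1$ to a vertex of $G_2$. *)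

theory Defs
  imports Main
begin

definition is_graph :: "'a set \<Rightarrow> ('a \<Rightarrow> 'a \<Rightarrow> bool) \<Rightarrow> bool" where
  "is_graph V E \<longleftrightarrow> finite V \<and> V \<noteq> {}
     \<and> (\<forall>x y. E x y \<longrightarrow> x \<in> V \<and> y \<in> V)
     \<and> (\<forall>x y. E x y \<longrightarrow> E y x)
     \<and> (\<forall>x. \<not> E x x)
     \<and> (\<forall>x\<in>V. \<forall>y\<in>V. E\<^sup>*\<^sup>* x y)"

definition closed_nbhd :: "'a set \<Rightarrow> ('a \<Rightarrow> 'a \<Rightarrow> bool) \<Rightarrow> 'a \<Rightarrow> 'a set" where
  "closed_nbhd V E v = {u \<in> V. E v u} \<union> {v}"

definition proper_colouring :: "'a set \<Rightarrow> ('a \<Rightarrow> 'a \<Rightarrow> bool) \<Rightarrow> ('a \<Rightarrow> nat) \<Rightarrow> nat \<Rightarrow> bool" where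
  "proper_colouring V E c k \<longleftrightarrow> (\<forall>v\<in>V. c v < k) \<and> (\<forall>x\<in>V. \<forall>y\<in>V. E x y \<longrightarrow> c x \<noteq> c y)"

definition chromatic_number :: "'a set \<Rightarrow> ('a \<Rightarrow> 'a \<Rightarrow> bool) \<Rightarrow> nat" where
  "chromatic_number V E = (LEAST k. \<exists>c. proper_colouring V E c k)"

definition chromatic_colouring :: "'a set \<Rightarrow> ('a \<Rightarrow> 'a \<Rightarrow> bool) \<Rightarrow> ('a \<Rightarrow> nat) \<Rightarrow> bool" where
  "chromatic_colouring V E c \<longleftrightarrow> proper_colouring V E c (chromatic_number V E)"

definition rainbow_faded :: "'a set \<Rightarrow> ('a \<Rightarrow> 'a \<Rightarrow> bool) \<Rightarrow> ('a \<Rightarrow> nat) \<Rightarrow> 'a set \<Rightarrow> 'a \<Rightarrow> bool" where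
  "rainbow_faded V E c F v \<longleftrightarrow>
     (\<forall>i < chromatic_number V E. \<exists>u \<in> closed_nbhd V E v - F. c u = i)"

definition rainbow_count_faded :: "'a set \<Rightarrow> ('a \<Rightarrow> 'a \<Rightarrow> bool) \<Rightarrow> ('a \<Rightarrow> nat) \<Rightarrow> 'a set \<Rightarrow> nat" where
  "rainbow_count_faded V E c F = card {v \<in> V. rainbow_faded V E c F v}"

definition rainbow_count :: "'a set \<Rightarrow> ('a \<Rightarrow> 'a \<Rightarrow> bool) \<Rightarrow> ('a \<Rightarrow> nat) \<Rightarrow> nat" where
  "rainbow_count V E c = rainbow_count_faded V E c {}"

definition r_minus :: "'a set \<Rightarrow> ('a \<Rightarrow> 'a \<Rightarrow> bool) \<Rightarrow> nat" where
  "r_minus V E = Min {rainbow_count V E c | c. chromatic_colouring V E c}"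

definition r_plus :: "'a set \<Rightarrow> ('a \<Rightarrow> 'a \<Rightarrow> bool) \<Rightarrow> nat" where
  "r_plus V E = Max {rainbow_count V E c | c. chromatic_colouring V E c}"

definition fading_minus :: "'a set \<Rightarrow> ('a \<Rightarrow> 'a \<Rightarrow> bool) \<Rightarrow> nat" where
  "fading_minus V E = Max {card F | c F. chromatic_colouring V E c
       \<and> rainbow_count V E c = r_minus V E \<and> F \<subseteq> V
       \<and> rainbow_count_faded V E c F = r_minus V E}"

definition fading_plus :: "'a set \<Rightarrow> ('a \<Rightarrow> 'a \<Rightarrow> bool) \<Rightarrow> nat" where
  "fading_plus V E = Max {card F | c F. chromatic_colouring V E c
       \<and> rainbow_count V E c = r_plus V E \<and> F \<subseteq> V
       \<and> rainbow_count_faded V E c F = r_plus V E}"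

definition join_edges :: "'a set \<Rightarrow> ('a \<Rightarrow> 'a \<Rightarrow> bool) \<Rightarrow> 'a set \<Rightarrow> ('a \<Rightarrow> 'a \<Rightarrow> bool) \<Rightarrow> 'a \<Rightarrow> 'a \<Rightarrow> bool" where
  "join_edges V1 E1 V2 E2 x y \<longleftrightarrow> E1 x y \<or> E2 x y
     \<or> (x \<in> V1 \<and> y \<in> V2) \<or> (x \<in> V2 \<and> y \<in> V1)"

end

theory Submission
  imports Defs "HOL-Library.Set_Algebras"
begin

text \<open>In a chromatic colouring of \<open>G + H\<close> the two sides use disjoint sets of colours, and
  on each side the colouring is a chromatic colouring of that graph up to renaming colours;
  conversely chromatic colourings of \<open>G\<close> and \<open>H\<close> combine into one of \<open>G + H\<close>. A vertex of
  \<open>G\<close> is rainbow in \<open>G + H\<close> after fading \<open>F\<close> iff it is rainbow in \<open>G\<close> after fading \<open>F\<close> and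
  the unfaded vertices of \<open>H\<close> still show all colours of \<open>H\<close>. Every chromatic colouring has
  a rainbow vertex, so a fade set that keeps the rainbow set of each side intact also keeps
  all colours of each side visible. Hence the admissible fade sets of \<open>G + H\<close> are exactly
  the unions of admissible fade sets of \<open>G\<close> and \<open>H\<close>, rainbow counts add up, and the
  extremal rainbow counts and maximal fade set sizes add up as well.\<close>

lemma inj_on_image_subset_iff:
  assumes "inj_on f C" and "A \<subseteq> C" and "B \<subseteq> C"
  shows "f ` A \<subseteq> f ` B \<longleftrightarrow> A \<subseteq> B"
proof
  assume "f ` A \<subseteq> f ` B"
  then show "A \<subseteq> B"
    using inj_on_image_mem_iff[OF assms(1) _ assms(3)] assms(2) by blast
qed (rule image_mono)

lemma Max_set_plus:
  fixes A B :: "'a::{linorder, ordered_ab_semigroup_add} set"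
  assumes "finite A" "finite B" "A \<noteq> {}" "B \<noteq> {}"
  shows "Max (A + B) = Max A + Max B"
proof (rule antisym)
  show "Max (A + B) \<le> Max A + Max B"
    using assms
    by (intro Max.boundedI) (auto simp: finite_set_plus elim!: set_plus_elim intro!: add_mono)
  show "Max A + Max B \<le> Max (A + B)"
    using assms by (intro Max_ge finite_set_plus set_plus_intro Max_in)
qed

lemma Min_set_plus:
  fixes A B :: "'a::{linorder, ordered_ab_semigroup_add} set"
  assumes "finite A" "finite B" "A \<noteq> {}" "B \<noteq> {}"
  shows "Min (A + B) = Min A + Min B"
proof (rule antisym)
  show "Min A + Min B \<le> Min (A + B)"
    using assms
    by (intro Min.boundedI) (auto simp: finite_set_plus elim!: set_plus_elim intro!: add_mono)
  show "Min (A + B) \<le> Min A + Min B"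
    using assms by (intro Min_le finite_set_plus set_plus_intro Min_in)
qed

lemma proper_colouring_relabel:
  assumes "finite V" and "proper_colouring V E c k"
  obtains h where "inj_on h (c ` V)" and "proper_colouring V E (h \<circ> c) (card (c ` V))"
proof -
  obtain h where h: "bij_betw h (c ` V) {0..<card (c ` V)}"
    using ex_bij_betw_finite_nat assms(1) by blast
  then have inj: "inj_on h (c ` V)" by (rule bij_betw_imp_inj_on)
  have "proper_colouring V E (h \<circ> c) (card (c ` V))"
    using assms(2) bij_betw_apply[OF h] inj_on_eq_iff[OF inj]
    unfolding proper_colouring_def by auto
  with inj show thesis by (rule that)
qed

lemma chromatic_number_le_card_image:
  assumes "finite V" and "proper_colouring V E c k"
  shows "chromatic_number V E \<le> card (c ` V)"
proof -
  obtain h where "proper_colouring V E (h \<circ> c) (card (c ` V))"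
    using proper_colouring_relabel[OF assms] .
  then show ?thesis unfolding chromatic_number_def by (blast intro: Least_le)
qed

lemma chromatic_colouring_exists:
  assumes "finite V" and "irreflp E"
  obtains c where "chromatic_colouring V E c"
proof -
  obtain h where h: "bij_betw h V {0..<card V}" using ex_bij_betw_finite_nat assms(1) by blast
  then have "proper_colouring V E h (card V)"
    using assms(2) inj_on_eq_iff[OF bij_betw_imp_inj_on[OF h]] bij_betw_apply[OF h]
    unfolding proper_colouring_def irreflp_def by auto
  then have "\<exists>c. proper_colouring V E c (chromatic_number V E)"
    unfolding chromatic_number_def
    using LeastI_ex[of "\<lambda>k. \<exists>c. proper_colouring V E c k"] by blast
  then show thesis using that unfolding chromatic_colouring_def by blast
qed

lemma chromatic_colouring_image:
  assumes "finite V" and "chromatic_colouring V E c"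
  shows "c ` V = {0..<chromatic_number V E}"
proof (rule card_seteq)
  show "c ` V \<subseteq> {0..<chromatic_number V E}"
    using assms(2) unfolding chromatic_colouring_def proper_colouring_def by auto
  show "card {0..<chromatic_number V E} \<le> card (c ` V)"
    using chromatic_number_le_card_image assms unfolding chromatic_colouring_def by simp
qed simp

lemma chromatic_colouring_relabel:
  assumes "finite V" and "proper_colouring V E c k" and "card (c ` V) = chromatic_number V E"
  obtains h where "inj_on h (c ` V)" and "chromatic_colouring V E (h \<circ> c)"
  using proper_colouring_relabel[OF assms(1,2)] assms(3) unfolding chromatic_colouring_def by metis

text \<open>"All colours" is read as \<open>c ` V\<close> rather than \<open>{0..<\<chi>}\<close>, which makes the rainbow set
  invariant under injective renaming of colours; for chromatic colourings both readings agree.\<close>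

definition rainbow_vertices :: "'a set \<Rightarrow> ('a \<Rightarrow> 'a \<Rightarrow> bool) \<Rightarrow> ('a \<Rightarrow> nat) \<Rightarrow> 'a set \<Rightarrow> 'a set" where
  "rainbow_vertices V E c F = {v \<in> V. c ` V \<subseteq> c ` (closed_nbhd V E v - F)}"

definition keeps_colours :: "'a set \<Rightarrow> ('a \<Rightarrow> nat) \<Rightarrow> 'a set \<Rightarrow> bool" where
  "keeps_colours X c F \<longleftrightarrow> c ` X \<subseteq> c ` (X - F)"

lemma closed_nbhd_subset: "v \<in> V \<Longrightarrow> closed_nbhd V E v \<subseteq> V"
  unfolding closed_nbhd_def by auto

lemma rainbow_count_faded_eq_card:
  assumes "finite V" and "chromatic_colouring V E c"
  shows "rainbow_count_faded V E c F = card (rainbow_vertices V E c F)"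
proof -
  have "{v \<in> V. rainbow_faded V E c F v} = rainbow_vertices V E c F"
    unfolding rainbow_vertices_def rainbow_faded_def chromatic_colouring_image[OF assms]
    by (auto simp: subset_iff image_iff)
  then show ?thesis unfolding rainbow_count_faded_def by simp
qed

lemma rainbow_count_eq_card:
  "finite V \<Longrightarrow> chromatic_colouring V E c \<Longrightarrow> rainbow_count V E c = card (rainbow_vertices V E c {})"
  unfolding rainbow_count_def by (rule rainbow_count_faded_eq_card)

lemma rainbow_vertices_subset: "rainbow_vertices V E c F \<subseteq> V"
  unfolding rainbow_vertices_def by auto

lemma finite_rainbow_vertices: "finite V \<Longrightarrow> finite (rainbow_vertices V E c F)"
  using rainbow_vertices_subset by (rule finite_subset)

lemma rainbow_vertices_antimono: "F \<subseteq> F' \<Longrightarrow> rainbow_vertices V E c F' \<subseteq> rainbow_vertices V E c F"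
  unfolding rainbow_vertices_def by (blast intro: image_mono)

lemma rainbow_vertices_Int: "rainbow_vertices V E c (F \<inter> V) = rainbow_vertices V E c F"
proof -
  have "closed_nbhd V E v - F \<inter> V = closed_nbhd V E v - F" if "v \<in> V" for v
    using closed_nbhd_subset[OF that] by blast
  then show ?thesis unfolding rainbow_vertices_def by (intro Collect_cong conj_cong) simp_all
qed

lemma keeps_colours_empty [simp]: "keeps_colours X c {}"
  unfolding keeps_colours_def by simp

lemma keeps_colours_if_rainbow_vertex:
  assumes "v \<in> rainbow_vertices V E c F"
  shows "keeps_colours V c F"
proof -
  have "v \<in> V" and rainbow: "c ` V \<subseteq> c ` (closed_nbhd V E v - F)"
    using assms unfolding rainbow_vertices_def by auto
  have "c ` (closed_nbhd V E v - F) \<subseteq> c ` (V - F)"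
    using closed_nbhd_subset[OF \<open>v \<in> V\<close>] by (intro image_mono) blast
  with rainbow show ?thesis unfolding keeps_colours_def by (rule subset_trans)
qed

lemma image_subset_image_relabel_iff:
  assumes "inj_on h (c ` X)" and "\<forall>x\<in>X. d x = h (c x)" and "Y \<subseteq> X"
  shows "d ` X \<subseteq> d ` Y \<longleftrightarrow> c ` X \<subseteq> c ` Y"
proof -
  have "d ` Z = h ` c ` Z" if "Z \<subseteq> X" for Z
    using assms(2) that by (auto simp: image_image intro!: image_cong)
  then show ?thesis
    using inj_on_image_subset_iff[OF assms(1)] assms(3) by (simp add: image_mono)
qed

lemma rainbow_vertices_relabel:
  assumes "inj_on h (c ` V)" and "\<forall>x\<in>V. d x = h (c x)"
  shows "rainbow_vertices V E d F = rainbow_vertices V E c F"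
proof -
  have "d ` V \<subseteq> d ` (closed_nbhd V E v - F) \<longleftrightarrow> c ` V \<subseteq> c ` (closed_nbhd V E v - F)"
    if "v \<in> V" for v
    using closed_nbhd_subset[OF that] by (intro image_subset_image_relabel_iff[OF assms]) blast
  then show ?thesis unfolding rainbow_vertices_def by (intro Collect_cong conj_cong) simp_all
qed

lemma keeps_colours_relabel:
  assumes "inj_on h (c ` X)" and "\<forall>x\<in>X. d x = h (c x)"
  shows "keeps_colours X d F = keeps_colours X c F"
  unfolding keeps_colours_def by (rule image_subset_image_relabel_iff[OF assms Diff_subset])

lemma faded_rainbow_count_eq_iff:
  assumes "finite V" and "chromatic_colouring V E c"
  shows "rainbow_count_faded V E c F = rainbow_count V E c
           \<longleftrightarrow> rainbow_vertices V E c F = rainbow_vertices V E c {}"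
  unfolding rainbow_count_def rainbow_count_faded_eq_card[OF assms]
  using card_subset_eq[OF finite_rainbow_vertices[OF assms(1)]
      rainbow_vertices_antimono[OF empty_subsetI]]
  by auto

text \<open>If no vertex were rainbow, every vertex of the top colour could be recoloured with a
  colour missing from its closed neighbourhood, giving a proper colouring with fewer colours.\<close>

lemma rainbow_vertices_nonempty:
  assumes "V \<noteq> {}" and sym: "\<And>x y. E x y \<Longrightarrow> E y x" and "chromatic_colouring V E c"
  shows "rainbow_vertices V E c {} \<noteq> {}"
proof
  assume no_rainbow: "rainbow_vertices V E c {} = {}"
  define k where "k = chromatic_number V E"
  have proper: "proper_colouring V E c k"
    using assms(3) unfolding chromatic_colouring_def k_def .
  have "k > 0"
    using assms(1) proper unfolding proper_colouring_def by fastforce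
  have "\<forall>v\<in>V. \<exists>j. j \<in> c ` V \<and> j \<notin> c ` closed_nbhd V E v"
    using no_rainbow unfolding rainbow_vertices_def by auto
  then obtain m where m: "\<And>v. v \<in> V \<Longrightarrow> m v \<in> c ` V \<and> m v \<notin> c ` closed_nbhd V E v"
    by metis
  have in_nbhd: "u \<in> closed_nbhd V E v" if "u = v \<or> u \<in> V \<and> E v u" for u v
    using that unfolding closed_nbhd_def by auto
  define c' where "c' x = (if c x = k - 1 then m x else c x)" for x
  have "proper_colouring V E c' (k - 1)"
    unfolding proper_colouring_def
  proof (intro conjI ballI impI)
    fix v assume "v \<in> V"
    then have "c v < k" and "m v < k" and "m v \<noteq> c v"
      using m[of v] in_nbhd[of v v] proper unfolding proper_colouring_def by auto
    then show "c' v < k - 1" unfolding c'_def by auto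
  next
    fix x y assume "x \<in> V" "y \<in> V" "E x y"
    then have "c x \<noteq> c y" and "c x = k - 1 \<Longrightarrow> m x \<noteq> c y" and "c y = k - 1 \<Longrightarrow> m y \<noteq> c x"
      using proper m[of x] m[of y] in_nbhd[of y x] in_nbhd[of x y] sym[of x y]
      unfolding proper_colouring_def by blast+
    then show "c' x \<noteq> c' y" unfolding c'_def by auto
  qed
  then have "k \<le> k - 1" unfolding k_def chromatic_number_def by (blast intro: Least_le)
  with \<open>k > 0\<close> show False by simp
qed

definition rainbow_counts :: "'a set \<Rightarrow> ('a \<Rightarrow> 'a \<Rightarrow> bool) \<Rightarrow> nat set" where
  "rainbow_counts V E = {rainbow_count V E c | c. chromatic_colouring V E c}"

definition fade_sizes :: "'a set \<Rightarrow> ('a \<Rightarrow> 'a \<Rightarrow> bool) \<Rightarrow> nat \<Rightarrow> nat set" where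
  "fade_sizes V E r = {card F | c F. chromatic_colouring V E c \<and> rainbow_count V E c = r
       \<and> F \<subseteq> V \<and> rainbow_count_faded V E c F = r}"

lemma r_minus_eq_Min: "r_minus V E = Min (rainbow_counts V E)"
  unfolding r_minus_def rainbow_counts_def ..

lemma r_plus_eq_Max: "r_plus V E = Max (rainbow_counts V E)"
  unfolding r_plus_def rainbow_counts_def ..

lemma fading_minus_eq_Max: "fading_minus V E = Max (fade_sizes V E (r_minus V E))"
  unfolding fading_minus_def fade_sizes_def ..

lemma fading_plus_eq_Max: "fading_plus V E = Max (fade_sizes V E (r_plus V E))"
  unfolding fading_plus_def fade_sizes_def ..

lemma rainbow_count_faded_le_card: "finite V \<Longrightarrow> rainbow_count_faded V E c F \<le> card V"
  unfolding rainbow_count_faded_def by (rule card_mono) auto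

lemma finite_rainbow_counts:
  assumes "finite V"
  shows "finite (rainbow_counts V E)"
proof -
  have "rainbow_counts V E \<subseteq> {..card V}"
    using rainbow_count_faded_le_card[OF assms]
    unfolding rainbow_counts_def rainbow_count_def by auto
  then show ?thesis by (rule finite_subset) simp
qed

lemma rainbow_counts_nonempty:
  assumes "finite V" and "irreflp E"
  shows "rainbow_counts V E \<noteq> {}"
proof -
  obtain c where "chromatic_colouring V E c" using chromatic_colouring_exists[OF assms] .
  then show ?thesis unfolding rainbow_counts_def by blast
qed

lemma r_minus_mem_rainbow_counts: "finite V \<Longrightarrow> irreflp E \<Longrightarrow> r_minus V E \<in> rainbow_counts V E"
  unfolding r_minus_eq_Min by (intro Min_in finite_rainbow_counts rainbow_counts_nonempty)

lemma r_minus_le: "finite V \<Longrightarrow> r \<in> rainbow_counts V E \<Longrightarrow> r_minus V E \<le> r"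
  unfolding r_minus_eq_Min by (intro Min_le finite_rainbow_counts)

lemma r_plus_mem_rainbow_counts: "finite V \<Longrightarrow> irreflp E \<Longrightarrow> r_plus V E \<in> rainbow_counts V E"
  unfolding r_plus_eq_Max by (intro Max_in finite_rainbow_counts rainbow_counts_nonempty)

lemma r_plus_ge: "finite V \<Longrightarrow> r \<in> rainbow_counts V E \<Longrightarrow> r \<le> r_plus V E"
  unfolding r_plus_eq_Max by (intro Max_ge finite_rainbow_counts)

lemma finite_fade_sizes:
  assumes "finite V"
  shows "finite (fade_sizes V E r)"
proof -
  have "fade_sizes V E r \<subseteq> {..card V}"
    unfolding fade_sizes_def using card_mono[OF assms] by fastforce
  then show ?thesis by (rule finite_subset) simp
qed

lemma zero_mem_fade_sizes: "r \<in> rainbow_counts V E \<Longrightarrow> 0 \<in> fade_sizes V E r"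
  unfolding rainbow_counts_def fade_sizes_def rainbow_count_def by force

lemma mem_rainbow_counts_if_mem_fade_sizes: "n \<in> fade_sizes V E r \<Longrightarrow> r \<in> rainbow_counts V E"
  unfolding rainbow_counts_def fade_sizes_def by blast

lemma mem_fade_sizes_iff:
  assumes "finite V"
  shows "n \<in> fade_sizes V E r \<longleftrightarrow> (\<exists>c F. chromatic_colouring V E c
           \<and> card (rainbow_vertices V E c {}) = r \<and> F \<subseteq> V
           \<and> rainbow_vertices V E c F = rainbow_vertices V E c {} \<and> n = card F)"
proof -
  have "rainbow_count V E c = r \<and> rainbow_count_faded V E c F = r \<longleftrightarrow>
      card (rainbow_vertices V E c {}) = r \<and> rainbow_vertices V E c F = rainbow_vertices V E c {}"
    if "chromatic_colouring V E c" for c F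
    using faded_rainbow_count_eq_iff[OF assms that, of F] rainbow_count_faded_eq_card[OF assms that]
    unfolding rainbow_count_def by metis
  then show ?thesis unfolding fade_sizes_def by blast
qed

lemma join_edges_commute: "join_edges V2 E2 V1 E1 = join_edges V1 E1 V2 E2"
  unfolding join_edges_def by (intro ext) blast

locale graph_join =
  fixes V1 V2 :: "'a set" and E1 E2 :: "'a \<Rightarrow> 'a \<Rightarrow> bool"
  assumes graph1: "is_graph V1 E1" and graph2: "is_graph V2 E2" and disjoint: "V1 \<inter> V2 = {}"
begin

abbreviation "V \<equiv> V1 \<union> V2"
abbreviation "E \<equiv> join_edges V1 E1 V2 E2"

lemma finite1: "finite V1" and finite2: "finite V2" and finite: "finite V"
  using graph1 graph2 unfolding is_graph_def by auto

lemma edges1: "E1 x y \<Longrightarrow> x \<in> V1 \<and> y \<in> V1" and edges2: "E2 x y \<Longrightarrow> x \<in> V2 \<and> y \<in> V2"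
  using graph1 graph2 unfolding is_graph_def by auto

lemma irrefl1: "irreflp E1" and irrefl2: "irreflp E2" and irrefl: "irreflp E"
  using graph1 graph2 disjoint unfolding is_graph_def join_edges_def irreflp_def by auto

lemma closed_nbhd_join_left: "v \<in> V1 \<Longrightarrow> closed_nbhd V E v = closed_nbhd V1 E1 v \<union> V2"
  using edges1 edges2 disjoint unfolding closed_nbhd_def join_edges_def by blast

lemma rainbow_vertex_join_left_iff:
  assumes colours: "c ` V1 \<inter> c ` V2 = {}" and "v \<in> V1"
  shows "v \<in> rainbow_vertices V E c F \<longleftrightarrow>
           v \<in> rainbow_vertices V1 E1 c F \<and> keeps_colours V2 c F"
proof -
  let ?N = "closed_nbhd V1 E1 v - F"
  have "c ` (closed_nbhd V E v - F) = c ` ?N \<union> c ` (V2 - F)"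
    using closed_nbhd_join_left[OF \<open>v \<in> V1\<close>] by blast
  moreover have "c ` ?N \<subseteq> c ` V1"
    using closed_nbhd_subset[OF \<open>v \<in> V1\<close>] by blast
  ultimately have "c ` V \<subseteq> c ` (closed_nbhd V E v - F) \<longleftrightarrow>
      c ` V1 \<subseteq> c ` ?N \<and> c ` V2 \<subseteq> c ` (V2 - F)"
    using colours by blast
  then show ?thesis
    using \<open>v \<in> V1\<close> unfolding rainbow_vertices_def keeps_colours_def by blast
qed

end

sublocale graph_join \<subseteq> swap: graph_join V2 V1 E2 E1
  using graph1 graph2 disjoint by unfold_locales blast+

context graph_join
begin

definition join_rainbow :: "('a \<Rightarrow> nat) \<Rightarrow> ('a \<Rightarrow> nat) \<Rightarrow> 'a set \<Rightarrow> 'a set" where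
  "join_rainbow c1 c2 F =
     (if keeps_colours V2 c2 F then rainbow_vertices V1 E1 c1 F else {})
     \<union> (if keeps_colours V1 c1 F then rainbow_vertices V2 E2 c2 F else {})"

lemma rainbow_vertices_join:
  assumes "c ` V1 \<inter> c ` V2 = {}"
  shows "rainbow_vertices V E c F = join_rainbow c c F"
proof -
  have "c ` V2 \<inter> c ` V1 = {}" using assms by blast
  then have "v \<in> rainbow_vertices V E c F \<longleftrightarrow>
      v \<in> rainbow_vertices V2 E2 c F \<and> keeps_colours V1 c F" if "v \<in> V2" for v
    using swap.rainbow_vertex_join_left_iff[OF _ that]
    by (simp add: join_edges_commute Un_commute)
  then show ?thesis
    using rainbow_vertex_join_left_iff[OF assms] rainbow_vertices_subset[of V E c F]
      rainbow_vertices_subset[of V1 E1 c F] rainbow_vertices_subset[of V2 E2 c F]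
    unfolding join_rainbow_def by auto
qed

lemma join_rainbow_relabel:
  assumes "inj_on h1 (c1 ` V1)" and "\<forall>x\<in>V1. d1 x = h1 (c1 x)"
    and "inj_on h2 (c2 ` V2)" and "\<forall>x\<in>V2. d2 x = h2 (c2 x)"
  shows "join_rainbow d1 d2 F = join_rainbow c1 c2 F"
  unfolding join_rainbow_def
    rainbow_vertices_relabel[OF assms(1,2)] rainbow_vertices_relabel[OF assms(3,4)]
    keeps_colours_relabel[OF assms(1,2)] keeps_colours_relabel[OF assms(3,4)] ..

lemma join_rainbow_empty:
  "join_rainbow c1 c2 {} = rainbow_vertices V1 E1 c1 {} \<union> rainbow_vertices V2 E2 c2 {}"
  unfolding join_rainbow_def by simp

lemma card_join_rainbow_empty:
  assumes "chromatic_colouring V1 E1 c1" and "chromatic_colouring V2 E2 c2"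
  shows "card (join_rainbow c1 c2 {}) = rainbow_count V1 E1 c1 + rainbow_count V2 E2 c2"
  unfolding join_rainbow_empty rainbow_count_eq_card[OF finite1 assms(1)]
    rainbow_count_eq_card[OF finite2 assms(2)]
proof (rule card_Un_disjoint)
  show "rainbow_vertices V1 E1 c1 {} \<inter> rainbow_vertices V2 E2 c2 {} = {}"
    using disjoint rainbow_vertices_subset[of V1] rainbow_vertices_subset[of V2] by blast
qed (simp_all add: finite_rainbow_vertices finite1 finite2)

lemma join_rainbow_fade_iff:
  assumes "chromatic_colouring V1 E1 c1" and "chromatic_colouring V2 E2 c2"
  shows "join_rainbow c1 c2 F = join_rainbow c1 c2 {} \<longleftrightarrow>
           rainbow_vertices V1 E1 c1 F = rainbow_vertices V1 E1 c1 {}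
           \<and> rainbow_vertices V2 E2 c2 F = rainbow_vertices V2 E2 c2 {}"
proof
  assume "join_rainbow c1 c2 F = join_rainbow c1 c2 {}"
  moreover have "join_rainbow c1 c2 F \<subseteq> rainbow_vertices V1 E1 c1 F \<union> rainbow_vertices V2 E2 c2 F"
    unfolding join_rainbow_def by auto
  ultimately show "rainbow_vertices V1 E1 c1 F = rainbow_vertices V1 E1 c1 {}
           \<and> rainbow_vertices V2 E2 c2 F = rainbow_vertices V2 E2 c2 {}"
    using disjoint rainbow_vertices_subset[of V1 E1 c1] rainbow_vertices_subset[of V2 E2 c2]
      rainbow_vertices_antimono[of "{}" F V1 E1 c1] rainbow_vertices_antimono[of "{}" F V2 E2 c2]
    unfolding join_rainbow_empty by blast
next
  assume unchanged: "rainbow_vertices V1 E1 c1 F = rainbow_vertices V1 E1 c1 {}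
           \<and> rainbow_vertices V2 E2 c2 F = rainbow_vertices V2 E2 c2 {}"
  have "V1 \<noteq> {}" "V2 \<noteq> {}" "E1 x y \<Longrightarrow> E1 y x" "E2 x y \<Longrightarrow> E2 y x" for x y
    using graph1 graph2 unfolding is_graph_def by auto
  then have "keeps_colours V1 c1 F" and "keeps_colours V2 c2 F"
    using rainbow_vertices_nonempty[of V1 E1 c1] rainbow_vertices_nonempty[of V2 E2 c2]
      assms unchanged
    by (metis equals0I keeps_colours_if_rainbow_vertex)+
  then show "join_rainbow c1 c2 F = join_rainbow c1 c2 {}"
    using unchanged unfolding join_rainbow_def by simp
qed

lemma proper_colouring_join_restrict:
  assumes "proper_colouring V E c k"
  shows "c ` V1 \<inter> c ` V2 = {}" and "proper_colouring V1 E1 c k" and "proper_colouring V2 E2 c k"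
  using assms edges1 edges2 unfolding proper_colouring_def join_edges_def by fastforce+

definition join_colouring :: "('a \<Rightarrow> nat) \<Rightarrow> ('a \<Rightarrow> nat) \<Rightarrow> 'a \<Rightarrow> nat" where
  "join_colouring c1 c2 x = (if x \<in> V1 then c1 x else chromatic_number V1 E1 + c2 x)"

lemma proper_colouring_join_colouring:
  assumes "proper_colouring V1 E1 c1 (chromatic_number V1 E1)" and "proper_colouring V2 E2 c2 k"
  shows "proper_colouring V E (join_colouring c1 c2) (chromatic_number V1 E1 + k)"
proof -
  have bound1: "c1 x < chromatic_number V1 E1" if "x \<in> V1" for x
    using assms(1) that unfolding proper_colouring_def by blast
  have bound2: "c2 x < k" if "x \<in> V2" for x
    using assms(2) that unfolding proper_colouring_def by blast
  have "join_colouring c1 c2 x \<noteq> join_colouring c1 c2 y" if "x \<in> V" "y \<in> V" "E x y" for x y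
  proof (cases "x \<in> V1"; cases "y \<in> V1")
    assume "x \<in> V1" "y \<in> V1"
    then show ?thesis
      using that(3) assms(1) disjoint edges2
      unfolding join_edges_def join_colouring_def proper_colouring_def by auto
  next
    assume "x \<notin> V1" "y \<notin> V1"
    then show ?thesis
      using that assms(2) edges1
      unfolding join_edges_def join_colouring_def proper_colouring_def by auto
  qed (use bound1[of x] bound1[of y] in \<open>auto simp: join_colouring_def\<close>)
  then show ?thesis
    using bound1 bound2 unfolding proper_colouring_def join_colouring_def by fastforce
qed

lemma card_colours_join:
  assumes "chromatic_colouring V E c"
  shows "card (c ` V1) + card (c ` V2) = chromatic_number V E"
proof -
  have "c ` V1 \<inter> c ` V2 = {}"
    using assms proper_colouring_join_restrict(1) unfolding chromatic_colouring_def by blast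
  then have "card (c ` V1) + card (c ` V2) = card (c ` V)"
    using finite1 finite2 by (simp add: image_Un card_Un_disjoint)
  also have "\<dots> = chromatic_number V E"
    using chromatic_colouring_image[OF finite assms] by simp
  finally show ?thesis .
qed

lemma chromatic_number_join:
  "chromatic_number V E = chromatic_number V1 E1 + chromatic_number V2 E2"
proof (rule antisym)
  obtain c1 where "chromatic_colouring V1 E1 c1"
    using chromatic_colouring_exists[OF finite1 irrefl1] .
  moreover obtain c2 where "chromatic_colouring V2 E2 c2"
    using chromatic_colouring_exists[OF finite2 irrefl2] .
  ultimately have "proper_colouring V E (join_colouring c1 c2)
      (chromatic_number V1 E1 + chromatic_number V2 E2)"
    unfolding chromatic_colouring_def by (rule proper_colouring_join_colouring)
  then show "chromatic_number V E \<le> chromatic_number V1 E1 + chromatic_number V2 E2"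
    unfolding chromatic_number_def by (blast intro: Least_le)
next
  obtain c where c: "chromatic_colouring V E c"
    using chromatic_colouring_exists[OF finite irrefl] .
  then have proper: "proper_colouring V E c (chromatic_number V E)"
    unfolding chromatic_colouring_def .
  show "chromatic_number V1 E1 + chromatic_number V2 E2 \<le> chromatic_number V E"
    using chromatic_number_le_card_image finite1 finite2
      proper_colouring_join_restrict(2,3)[OF proper] card_colours_join[OF c]
    by (metis add_mono)
qed

lemma chromatic_colouring_join_colouring:
  assumes "chromatic_colouring V1 E1 c1" and "chromatic_colouring V2 E2 c2"
  shows "chromatic_colouring V E (join_colouring c1 c2)"
  using proper_colouring_join_colouring assms
  unfolding chromatic_colouring_def chromatic_number_join by blast

lemma rainbow_vertices_join_colouring:
  assumes "chromatic_colouring V1 E1 c1"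
  shows "rainbow_vertices V E (join_colouring c1 c2) F = join_rainbow c1 c2 F"
proof -
  let ?c = "join_colouring c1 c2" and ?k = "chromatic_number V1 E1"
  have "\<forall>x\<in>V1. ?c x < ?k" and "\<forall>x\<in>V2. ?k \<le> ?c x"
    using assms disjoint unfolding chromatic_colouring_def proper_colouring_def join_colouring_def
    by auto
  then have "?c ` V1 \<inter> ?c ` V2 = {}" by fastforce
  moreover have "join_rainbow ?c ?c F = join_rainbow c1 c2 F"
    using disjoint
    by (intro join_rainbow_relabel[of id c1 ?c "(+) ?k" c2 ?c]) (auto simp: join_colouring_def)
  ultimately show ?thesis by (simp add: rainbow_vertices_join)
qed

lemma chromatic_colouring_join_split:
  assumes "chromatic_colouring V E c"
  obtains c1 c2 where "chromatic_colouring V1 E1 c1" and "chromatic_colouring V2 E2 c2"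
    and "\<And>F. rainbow_vertices V E c F = join_rainbow c1 c2 F"
proof -
  have proper: "proper_colouring V E c (chromatic_number V E)"
    using assms unfolding chromatic_colouring_def .
  note parts = proper_colouring_join_restrict[OF proper]
  from card_colours_join[OF assms]
  have "card (c ` V1) = chromatic_number V1 E1" and "card (c ` V2) = chromatic_number V2 E2"
    using chromatic_number_le_card_image[OF finite1 parts(2)]
      chromatic_number_le_card_image[OF finite2 parts(3)]
    unfolding chromatic_number_join by linarith+
  then obtain h1 h2 where
      "inj_on h1 (c ` V1)" "chromatic_colouring V1 E1 (h1 \<circ> c)"
      "inj_on h2 (c ` V2)" "chromatic_colouring V2 E2 (h2 \<circ> c)"
    using chromatic_colouring_relabel[OF finite1 parts(2)]
      chromatic_colouring_relabel[OF finite2 parts(3)]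
    by metis
  moreover have "rainbow_vertices V E c F = join_rainbow (h1 \<circ> c) (h2 \<circ> c) F" for F
    using rainbow_vertices_join[OF parts(1)] join_rainbow_relabel[of h1 c "h1 \<circ> c" h2 c "h2 \<circ> c"]
      \<open>inj_on h1 (c ` V1)\<close> \<open>inj_on h2 (c ` V2)\<close> by simp
  ultimately show thesis using that by blast
qed

lemma rainbow_counts_join: "rainbow_counts V E = rainbow_counts V1 E1 + rainbow_counts V2 E2"
proof (intro equalityI subsetI)
  fix r assume "r \<in> rainbow_counts V E"
  then obtain c where c: "chromatic_colouring V E c" and "r = rainbow_count V E c"
    unfolding rainbow_counts_def by blast
  obtain c1 c2 where "chromatic_colouring V1 E1 c1" "chromatic_colouring V2 E2 c2"
      and "\<And>F. rainbow_vertices V E c F = join_rainbow c1 c2 F"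
    using chromatic_colouring_join_split[OF c] by blast
  then have "r = rainbow_count V1 E1 c1 + rainbow_count V2 E2 c2"
    using \<open>r = rainbow_count V E c\<close> card_join_rainbow_empty rainbow_count_eq_card[OF finite c]
    by simp
  then show "r \<in> rainbow_counts V1 E1 + rainbow_counts V2 E2"
    using \<open>chromatic_colouring V1 E1 c1\<close> \<open>chromatic_colouring V2 E2 c2\<close>
    unfolding rainbow_counts_def by blast
next
  fix r assume "r \<in> rainbow_counts V1 E1 + rainbow_counts V2 E2"
  then obtain c1 c2 where c1: "chromatic_colouring V1 E1 c1" and c2: "chromatic_colouring V2 E2 c2"
      and "r = rainbow_count V1 E1 c1 + rainbow_count V2 E2 c2"
    unfolding rainbow_counts_def by (auto elim!: set_plus_elim)
  then have "r = rainbow_count V E (join_colouring c1 c2)"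
    using card_join_rainbow_empty rainbow_vertices_join_colouring
      rainbow_count_eq_card[OF finite chromatic_colouring_join_colouring] by simp
  then show "r \<in> rainbow_counts V E"
    using chromatic_colouring_join_colouring[OF c1 c2] unfolding rainbow_counts_def by blast
qed

lemma fade_sizes_join_add:
  assumes "n1 \<in> fade_sizes V1 E1 r1" and "n2 \<in> fade_sizes V2 E2 r2"
  shows "n1 + n2 \<in> fade_sizes V E (r1 + r2)"
proof -
  obtain c1 F1 where c1: "chromatic_colouring V1 E1 c1" "card (rainbow_vertices V1 E1 c1 {}) = r1"
      and F1: "F1 \<subseteq> V1" "rainbow_vertices V1 E1 c1 F1 = rainbow_vertices V1 E1 c1 {}" "n1 = card F1"
    using assms(1) unfolding mem_fade_sizes_iff[OF finite1] by blast
  obtain c2 F2 where c2: "chromatic_colouring V2 E2 c2" "card (rainbow_vertices V2 E2 c2 {}) = r2"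
      and F2: "F2 \<subseteq> V2" "rainbow_vertices V2 E2 c2 F2 = rainbow_vertices V2 E2 c2 {}" "n2 = card F2"
    using assms(2) unfolding mem_fade_sizes_iff[OF finite2] by blast
  let ?c = "join_colouring c1 c2"
  have "(F1 \<union> F2) \<inter> V1 = F1" and "(F1 \<union> F2) \<inter> V2 = F2"
    using F1(1) F2(1) disjoint by blast+
  then have "rainbow_vertices V1 E1 c1 (F1 \<union> F2) = rainbow_vertices V1 E1 c1 {}"
      and "rainbow_vertices V2 E2 c2 (F1 \<union> F2) = rainbow_vertices V2 E2 c2 {}"
    using F1(2) F2(2) rainbow_vertices_Int by metis+
  then have "rainbow_vertices V E ?c (F1 \<union> F2) = rainbow_vertices V E ?c {}"
    using join_rainbow_fade_iff[OF c1(1) c2(1)] rainbow_vertices_join_colouring[OF c1(1)] by simp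
  moreover have "card (rainbow_vertices V E ?c {}) = r1 + r2"
    using card_join_rainbow_empty[OF c1(1) c2(1)] rainbow_vertices_join_colouring[OF c1(1)]
      rainbow_count_eq_card[OF finite1 c1(1)] rainbow_count_eq_card[OF finite2 c2(1)] c1(2) c2(2)
    by simp
  moreover have "card (F1 \<union> F2) = n1 + n2"
  proof -
    have "F1 \<inter> F2 = {}" using F1(1) F2(1) disjoint by blast
    then show ?thesis
      using F1(3) F2(3) finite_subset[OF F1(1) finite1] finite_subset[OF F2(1) finite2]
      by (simp add: card_Un_disjoint)
  qed
  ultimately show ?thesis
    unfolding mem_fade_sizes_iff[OF finite]
    using chromatic_colouring_join_colouring[OF c1(1) c2(1)] F1(1) F2(1)
    by (metis Un_mono)
qed

lemma fade_sizes_join_split: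
  assumes "n \<in> fade_sizes V E r"
  obtains r1 r2 n1 n2 where "r = r1 + r2" and "n = n1 + n2"
    and "n1 \<in> fade_sizes V1 E1 r1" and "n2 \<in> fade_sizes V2 E2 r2"
proof -
  obtain c F where c: "chromatic_colouring V E c" "card (rainbow_vertices V E c {}) = r"
      and F: "F \<subseteq> V" "rainbow_vertices V E c F = rainbow_vertices V E c {}" "n = card F"
    using assms unfolding mem_fade_sizes_iff[OF finite] by blast
  obtain c1 c2 where c1: "chromatic_colouring V1 E1 c1" and c2: "chromatic_colouring V2 E2 c2"
      and split: "\<And>F. rainbow_vertices V E c F = join_rainbow c1 c2 F"
    using chromatic_colouring_join_split[OF c(1)] by blast
  have unchanged: "rainbow_vertices V1 E1 c1 (F \<inter> V1) = rainbow_vertices V1 E1 c1 {}"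
      "rainbow_vertices V2 E2 c2 (F \<inter> V2) = rainbow_vertices V2 E2 c2 {}"
    using F(2) join_rainbow_fade_iff[OF c1 c2] unfolding split
    by (simp_all add: rainbow_vertices_Int)
  have "card (F \<inter> V1) \<in> fade_sizes V1 E1 (rainbow_count V1 E1 c1)"
    unfolding mem_fade_sizes_iff[OF finite1]
    using c1 unchanged(1) rainbow_count_eq_card[OF finite1 c1]
    by (intro exI[of _ c1] exI[of _ "F \<inter> V1"]) auto
  moreover have "card (F \<inter> V2) \<in> fade_sizes V2 E2 (rainbow_count V2 E2 c2)"
    unfolding mem_fade_sizes_iff[OF finite2]
    using c2 unchanged(2) rainbow_count_eq_card[OF finite2 c2]
    by (intro exI[of _ c2] exI[of _ "F \<inter> V2"]) auto
  moreover have "r = rainbow_count V1 E1 c1 + rainbow_count V2 E2 c2"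
    using c(2) card_join_rainbow_empty[OF c1 c2] unfolding split by simp
  moreover have "n = card (F \<inter> V1) + card (F \<inter> V2)"
  proof -
    have "F = F \<inter> V1 \<union> F \<inter> V2" using F(1) by blast
    then show ?thesis
      using F(3) disjoint finite1 finite2 card_Un_disjoint[of "F \<inter> V1" "F \<inter> V2"] by force
  qed
  ultimately show thesis using that by blast
qed

lemma fade_sizes_join_extremal:
  assumes "\<And>r1 r2. r1 \<in> rainbow_counts V1 E1 \<Longrightarrow> r2 \<in> rainbow_counts V2 E2 \<Longrightarrow>
             r1 + r2 = s1 + s2 \<Longrightarrow> r1 = s1"
  shows "fade_sizes V E (s1 + s2) = fade_sizes V1 E1 s1 + fade_sizes V2 E2 s2"
proof (intro equalityI subsetI)
  fix n assume "n \<in> fade_sizes V E (s1 + s2)"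
  then obtain r1 r2 n1 n2 where "s1 + s2 = r1 + r2" "n = n1 + n2"
      "n1 \<in> fade_sizes V1 E1 r1" "n2 \<in> fade_sizes V2 E2 r2"
    by (rule fade_sizes_join_split)
  moreover from this have "r1 = s1"
    using assms mem_rainbow_counts_if_mem_fade_sizes by metis
  ultimately show "n \<in> fade_sizes V1 E1 s1 + fade_sizes V2 E2 s2" by auto
qed (auto elim!: set_plus_elim intro: fade_sizes_join_add)

lemma r_minus_join: "r_minus V E = r_minus V1 E1 + r_minus V2 E2"
  unfolding r_minus_eq_Min rainbow_counts_join
  using finite1 finite2 irrefl1 irrefl2
  by (intro Min_set_plus finite_rainbow_counts rainbow_counts_nonempty)

lemma r_plus_join: "r_plus V E = r_plus V1 E1 + r_plus V2 E2"
  unfolding r_plus_eq_Max rainbow_counts_join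
  using finite1 finite2 irrefl1 irrefl2
  by (intro Max_set_plus finite_rainbow_counts rainbow_counts_nonempty)

text \<open>The last hypothesis holds when \<open>s1, s2\<close> are both minimal or both maximal rainbow counts.\<close>

lemma Max_fade_sizes_join:
  assumes "s1 \<in> rainbow_counts V1 E1" and "s2 \<in> rainbow_counts V2 E2"
    and "\<And>r1 r2. r1 \<in> rainbow_counts V1 E1 \<Longrightarrow> r2 \<in> rainbow_counts V2 E2 \<Longrightarrow>
           r1 + r2 = s1 + s2 \<Longrightarrow> r1 = s1"
  shows "Max (fade_sizes V E (s1 + s2)) = Max (fade_sizes V1 E1 s1) + Max (fade_sizes V2 E2 s2)"
proof -
  have "fade_sizes V1 E1 s1 \<noteq> {}" and "fade_sizes V2 E2 s2 \<noteq> {}"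
    using zero_mem_fade_sizes assms(1,2) by blast+
  with Max_set_plus[OF finite_fade_sizes[OF finite1] finite_fade_sizes[OF finite2]] show ?thesis
    using fade_sizes_join_extremal[OF assms(3)] by simp
qed

lemma fading_minus_join: "fading_minus V E = fading_minus V1 E1 + fading_minus V2 E2"
  unfolding fading_minus_eq_Max r_minus_join
proof (rule Max_fade_sizes_join)
  fix r1 r2 assume "r1 \<in> rainbow_counts V1 E1" "r2 \<in> rainbow_counts V2 E2"
    and "r1 + r2 = r_minus V1 E1 + r_minus V2 E2"
  then show "r1 = r_minus V1 E1" using r_minus_le[OF finite1] r_minus_le[OF finite2] by fastforce
qed (simp_all add: r_minus_mem_rainbow_counts finite1 finite2 irrefl1 irrefl2)

lemma fading_plus_join: "fading_plus V E = fading_plus V1 E1 + fading_plus V2 E2"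
  unfolding fading_plus_eq_Max r_plus_join
proof (rule Max_fade_sizes_join)
  fix r1 r2 assume "r1 \<in> rainbow_counts V1 E1" "r2 \<in> rainbow_counts V2 E2"
    and "r1 + r2 = r_plus V1 E1 + r_plus V2 E2"
  then show "r1 = r_plus V1 E1" using r_plus_ge[OF finite1] r_plus_ge[OF finite2] by fastforce
qed (simp_all add: r_plus_mem_rainbow_counts finite1 finite2 irrefl1 irrefl2)

end

theorem theorem2p4:
  fixes V1 V2 :: "'a set" and E1 E2 :: "'a \<Rightarrow> 'a \<Rightarrow> bool"
  assumes "is_graph V1 E1" and "is_graph V2 E2" and "V1 \<inter> V2 = {}"
  shows "fading_minus (V1 \<union> V2) (join_edges V1 E1 V2 E2) = fading_minus V1 E1 + fading_minus V2 E2
       \<and> fading_plus (V1 \<union> V2) (join_edges V1 E1 V2 E2) = fading_plus V1 E1 + fading_plus V2 E2"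
proof -
  interpret graph_join V1 V2 E1 E2 using assms by unfold_locales
  show ?thesis using fading_minus_join fading_plus_join ..
qed

end
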